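(* Let $N\ge2$, $M\ge1$, $k\ge0$ and let $\psi\in\mathcal H_M$. Then the operators $\mathcal T^k(|\psi\rangle\langle\psi|)$ on $\mathcal H_{M+k}$ and $\mathcal W_k(|\psi\rangle\langle\psi|)$ on $\mathcal H_k$ have the same nonzero eigenvalues, counted with multiplicity.
   Context: For $n\ge0$, $\mathcal H_n=P_n(\mathbb C^N)^{\otimes n}$ is the totally symmetric subspace ($P_n$ the symmetrizing projection, $\mathcal H_0=\mathbb C$). On the bosonic Fock space $\bigoplus_{n}\mathcal H_n$, $a^*(v)\phi=\sqrt{n+1}P_{n+1}(v\otimes\phi)$ for $\phi\in\mathcal H_n$, $a(v)=a^*(v)^*$; with an orthonormal basis $e_1,\dots,e_N$ of $\mathbb C^N$, $a_i=a(e_i)$. $\mathcal T^k(\Gamma)=\frac{(M+k)!}{M!}P_{M+k}(I_{\mathbb C^N}^{\otimes k}\otimes\Gamma)P_{M+k}$ for operators $\Gamma=P_M\Gamma P_M$ on $\mathcal H_M$. $\mathcal W_k(\Gamma)=\frac1{k!}\sum_{i_1,\dots,i_k}\sum_{j_1,\dots,j_k}\mathrm{Tr}_{\mathcal H_M}(\Gamma\,a_{i_1}\cdots a_{i_k}a^*_{j_k}\cdots a^*_{j_1})\,a^*_{i_1}\cdots a^*_{i_k}a_{j_k}\cdots a_{j_1}$ restricted to $\mathcal H_k$. *)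

theory Defs
  imports "Jordan_Normal_Form.Schur_Decomposition" "HOL-Combinatorics.Permutations"
begin

text \<open>The n-fold tensor power of C^N is C^(N^n); the basis vector
 e_{i_1} (x) ... (x) e_{i_n} has index a = sum_j i_j N^(n-j) (first factor is the
 most significant base-N digit).\<close>

definition digit :: "nat \<Rightarrow> nat \<Rightarrow> nat \<Rightarrow> nat \<Rightarrow> nat" where
  "digit N n a j = (a div N ^ (n - 1 - j)) mod N"

definition kron :: "complex mat \<Rightarrow> complex mat \<Rightarrow> complex mat" where
  "kron A B = mat (dim_row A * dim_row B) (dim_col A * dim_col B)
     (\<lambda>(i,j). A $$ (i div dim_row B, j div dim_col B) * B $$ (i mod dim_row B, j mod dim_col B))"

text \<open>Symmetrizing projection P_n = (1/n!) sum_sigma U_sigma on (C^N)^{(x)n}.\<close>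
definition symP :: "nat \<Rightarrow> nat \<Rightarrow> complex mat" where
  "symP N n = mat (N ^ n) (N ^ n) (\<lambda>(a,b).
     of_nat (card {\<sigma>. \<sigma> permutes {..<n} \<and> (\<forall>j<n. digit N n a j = digit N n b (\<sigma> j))})
     / of_nat (fact n))"

text \<open>Creation operator a^*(v) : H_n \<rightarrow> H_(n+1), phi \<mapsto> sqrt(n+1) P_(n+1) (v (x) phi),
  as a matrix on the ambient tensor spaces (composed with P_n, so that it is the
  operator on H_n, extended by 0 on the orthogonal complement).\<close>
definition cre :: "nat \<Rightarrow> nat \<Rightarrow> complex vec \<Rightarrow> complex mat" where
  "cre N n v = complex_of_real (sqrt (real (n + 1))) \<cdot>\<^sub>m
     (symP N (n + 1) * kron (mat_of_cols N [v]) (1\<^sub>m (N ^ n)) * symP N n)"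

definition ann :: "nat \<Rightarrow> nat \<Rightarrow> complex vec \<Rightarrow> complex mat" where
  "ann N n v = mat_adjoint (cre N n v)"

text \<open>crs N n [j_1,...,j_k] = a^*_{j_k} ... a^*_{j_1} : H_n \<rightarrow> H_(n+k).\<close>
fun crs :: "nat \<Rightarrow> nat \<Rightarrow> nat list \<Rightarrow> complex mat" where
  "crs N n [] = 1\<^sub>m (N ^ n)"
| "crs N n (j # js) = crs N (n + 1) js * cre N n (unit_vec N j)"

text \<open>anns N n [i_1,...,i_k] = a_{i_1} ... a_{i_k} : H_(n+k) \<rightarrow> H_n.\<close>
fun anns :: "nat \<Rightarrow> nat \<Rightarrow> nat list \<Rightarrow> complex mat" where
  "anns N n [] = 1\<^sub>m (N ^ n)"
| "anns N n (i # is) = ann N n (unit_vec N i) * anns N (n + 1) is"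

definition mtrace :: "complex mat \<Rightarrow> complex" where
  "mtrace A = (\<Sum>i<dim_row A. A $$ (i, i))"

definition vnorm :: "complex vec \<Rightarrow> real" where
  "vnorm v = sqrt (\<Sum>i<dim_vec v. (cmod (v $ i))\<^sup>2)"

text \<open>An orthonormal basis of H_n (occupation-number basis): for each nondecreasing
  index tuple, the normalized symmetrization of the corresponding product vector.\<close>
definition sym_reps :: "nat \<Rightarrow> nat \<Rightarrow> nat list" where
  "sym_reps N n = filter (\<lambda>a. \<forall>j. j + 1 < n \<longrightarrow> digit N n a j \<le> digit N n a (j + 1)) [0..<N ^ n]"

definition symBasis :: "nat \<Rightarrow> nat \<Rightarrow> complex mat" where
  "symBasis N n = mat_of_cols (N ^ n)
     (map (\<lambda>a. let w = symP N n *\<^sub>v unit_vec (N ^ n) a in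
                 (1 / complex_of_real (vnorm w)) \<cdot>\<^sub>v w) (sym_reps N n))"

text \<open>Matrix of an operator A (leaving H_n invariant) restricted to H_n, in the
  orthonormal basis symBasis N n.\<close>
definition restrictH :: "nat \<Rightarrow> nat \<Rightarrow> complex mat \<Rightarrow> complex mat" where
  "restrictH N n A = mat_adjoint (symBasis N n) * A * symBasis N n"

definition traceH :: "nat \<Rightarrow> nat \<Rightarrow> complex mat \<Rightarrow> complex" where
  "traceH N n A = mtrace (restrictH N n A)"

definition ketbra :: "complex vec \<Rightarrow> complex mat" where
  "ketbra \<psi> = mat (dim_vec \<psi>) (dim_vec \<psi>) (\<lambda>(i,j). \<psi> $ i * cnj (\<psi> $ j))"

definition opT :: "nat \<Rightarrow> nat \<Rightarrow> nat \<Rightarrow> complex mat \<Rightarrow> complex mat" where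
  "opT N M k \<Gamma> = (of_nat (fact (M + k)) / of_nat (fact M)) \<cdot>\<^sub>m
     (symP N (M + k) * kron (1\<^sub>m (N ^ k)) \<Gamma> * symP N (M + k))"

definition idx_lists :: "nat \<Rightarrow> nat \<Rightarrow> nat list set" where
  "idx_lists N k = {xs. length xs = k \<and> set xs \<subseteq> {..<N}}"

definition opW :: "nat \<Rightarrow> nat \<Rightarrow> nat \<Rightarrow> complex mat \<Rightarrow> complex mat" where
  "opW N M k \<Gamma> = mat (N ^ k) (N ^ k) (\<lambda>(a,b). (1 / of_nat (fact k)) *
     (\<Sum>is\<in>idx_lists N k. \<Sum>js\<in>idx_lists N k.
        traceH N M (\<Gamma> * anns N M is * crs N M js) *
        (crs N 0 (rev is) * anns N 0 (rev js)) $$ (a, b)))"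

definition eig_mult :: "complex mat \<Rightarrow> complex \<Rightarrow> nat" where
  "eig_mult A c = order c (char_poly A)"

end

theory Submission
  imports Defs
begin

text \<open>
  Let Q = sqrt((M+k)!/M!) P_(M+k) (\<cdot> \<otimes> \<psi>), a map from H_k to H_(M+k). Expanding |\<psi>\<rangle>\<langle>\<psi>| inside
  I^(\<otimes>k) \<otimes> |\<psi>\<rangle>\<langle>\<psi>| gives T^k(|\<psi>\<rangle>\<langle>\<psi>|) = Q Q^*. On the other side a^*_(j_k) \<cdots> a^*_(j_1) \<psi> is the
  column of Q with index (j_1, ..., j_k), so the traces in W_k(|\<psi>\<rangle>\<langle>\<psi>|) are the entries of the Gram
  matrix Q^* Q, while a^*_(i_1) \<cdots> a^*_(i_k) a_(j_k) \<cdots> a_(j_1) acts on H_k as k! P_k |e_i\<rangle>\<langle>e_j| P_k; summing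
  over i and j gives W_k(|\<psi>\<rangle>\<langle>\<psi>|) = Q^* Q. In orthonormal bases S, T of H_(M+k) and H_k the two
  restrictions are X X^* and X^* X with X = S^* Q T, and for any A and B the products AB and BA have
  the same nonzero eigenvalues with multiplicity, because char_poly(AB) x^m = char_poly(BA) x^n.
\<close>

section \<open>Tensor indices as base-N digit strings\<close>

fun from_digits :: "nat \<Rightarrow> nat list \<Rightarrow> nat" where
  "from_digits N [] = 0"
| "from_digits N (x # xs) = x * N ^ length xs + from_digits N xs"

definition to_digits :: "nat \<Rightarrow> nat \<Rightarrow> nat \<Rightarrow> nat list" where
  "to_digits N n a = map (digit N n a) [0..<n]"

lemma mult_add_less: "x < (a::nat) \<Longrightarrow> y < b \<Longrightarrow> x * b + y < a * b"
proof -
  assume "x < a" "y < b"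
  then have "x * b + y < Suc x * b" by simp
  also have "\<dots> \<le> a * b" using \<open>x < a\<close> by (intro mult_right_mono) auto
  finally show ?thesis .
qed

lemma from_digits_append: "from_digits N (xs @ ys) = from_digits N xs * N ^ length ys + from_digits N ys"
  by (induction xs) (auto simp: power_add algebra_simps)

lemma from_digits_less: "set xs \<subseteq> {..<N} \<Longrightarrow> from_digits N xs < N ^ length xs"
proof (induction xs)
  case (Cons x xs)
  then show ?case using mult_add_less[of x N "from_digits N xs" "N ^ length xs"] by (simp add: mult.commute)
qed simp

lemma length_to_digits [simp]: "length (to_digits N n a) = n"
  by (simp add: to_digits_def)

lemma nth_to_digits [simp]: "j < n \<Longrightarrow> to_digits N n a ! j = digit N n a j"
  by (simp add: to_digits_def)

lemma set_to_digits: "0 < N \<Longrightarrow> set (to_digits N n a) \<subseteq> {..<N}"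
  by (auto simp: to_digits_def digit_def)

lemma to_digits_Suc: "to_digits N (Suc n) a = to_digits N n (a div N) @ [a mod N]"
proof (rule nth_equalityI)
  fix j assume "j < length (to_digits N (Suc n) a)"
  then have j: "j < Suc n" by simp
  show "to_digits N (Suc n) a ! j = (to_digits N n (a div N) @ [a mod N]) ! j"
  proof (cases "j < n")
    case True
    then have "N ^ (n - j) = N * N ^ (n - 1 - j)"
      by (metis Suc_diff_Suc diff_Suc_1 diff_diff_left plus_1_eq_Suc power_Suc)
    then show ?thesis using True by (simp add: nth_append digit_def div_mult2_eq)
  next
    case False
    then show ?thesis using j by (simp add: nth_append digit_def)
  qed
qed simp

lemma to_digits_from_digits: "set xs \<subseteq> {..<N} \<Longrightarrow> to_digits N (length xs) (from_digits N xs) = xs"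
proof (induction xs rule: rev_induct)
  case (snoc x xs)
  then have "x < N" by simp
  then have "from_digits N (xs @ [x]) div N = from_digits N xs"
    and "from_digits N (xs @ [x]) mod N = x"
    by (simp_all add: from_digits_append)
  then show ?case using snoc by (simp add: to_digits_Suc)
qed (simp add: to_digits_def)

lemma from_digits_to_digits: "a < N ^ n \<Longrightarrow> from_digits N (to_digits N n a) = a"
proof (induction n arbitrary: a)
  case (Suc n)
  then have "a div N < N ^ n"
    by (metis less_mult_imp_div_less mult.commute power_Suc)
  then show ?case using Suc.IH by (simp add: to_digits_Suc from_digits_append)
qed (simp add: to_digits_def)

lemma from_digits_to_digits_append:
  "y < N ^ k \<Longrightarrow> z < N ^ m \<Longrightarrow> from_digits N (to_digits N k y @ to_digits N m z) = y * N ^ m + z"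
  by (simp add: from_digits_append from_digits_to_digits)

lemma from_digits_append_less:
  assumes "set js \<subseteq> {..<N}" "b < N ^ n"
  shows "from_digits N (js @ to_digits N n b) < N ^ (n + length js)"
  using assms mult_add_less[OF from_digits_less[OF assms(1)] assms(2)]
  by (simp add: from_digits_append from_digits_to_digits power_add mult.commute)

lemma bij_betw_from_digits_idx_lists:
  assumes "0 < N"
  shows "bij_betw (from_digits N) (idx_lists N n) {..<N ^ n}"
proof (rule bij_betw_byWitness[where f' = "to_digits N n"])
  show "\<forall>xs\<in>idx_lists N n. to_digits N n (from_digits N xs) = xs"
    using to_digits_from_digits unfolding idx_lists_def by fastforce
  show "\<forall>a\<in>{..<N ^ n}. from_digits N (to_digits N n a) = a"
    using from_digits_to_digits by auto
  show "from_digits N ` idx_lists N n \<subseteq> {..<N ^ n}"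
    using from_digits_less unfolding idx_lists_def by fastforce
  show "to_digits N n ` {..<N ^ n} \<subseteq> idx_lists N n"
    using set_to_digits[OF assms] unfolding idx_lists_def by auto
qed

lemma finite_idx_lists: "finite (idx_lists N n)"
  using finite_lists_length_eq[of "{..<N}" n] by (simp add: idx_lists_def conj_commute)

lemma sum_idx_lists:
  "0 < N \<Longrightarrow> (\<Sum>xs\<in>idx_lists N n. f (from_digits N xs)) = (\<Sum>a<N ^ n. f a)"
  using sum.reindex_bij_betw[OF bij_betw_from_digits_idx_lists] by blast

lemma sum_to_digits:
  assumes "0 < N"
  shows "(\<Sum>y<N ^ n. h (to_digits N n y)) = (\<Sum>xs\<in>idx_lists N n. h xs)"
proof -
  have "(\<Sum>xs\<in>idx_lists N n. h xs) = (\<Sum>xs\<in>idx_lists N n. h (to_digits N n (from_digits N xs)))"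
    by (intro sum.cong) (auto simp: idx_lists_def to_digits_from_digits)
  then show ?thesis using sum_idx_lists[OF assms, of "\<lambda>y. h (to_digits N n y)"] by simp
qed

lemma sum_lessThan_mult:
  "(\<Sum>z<a * b. f z) = (\<Sum>x<a. \<Sum>y<b. f (x * b + y) :: 'a :: comm_monoid_add)" for a b :: nat
proof -
  have "(\<Sum>z\<in>{x * b..<x * b + b}. f z) = (\<Sum>y<b. f (x * b + y))" for x
    using sum.shift_bounds_nat_ivl[of f 0 "x * b" b] by (simp add: atLeast0LessThan add.commute)
  then show ?thesis by (simp add: sum.nat_group[symmetric])
qed

lemma index_mult_mat_sum:
  assumes "i < dim_row A" "j < dim_col B" "dim_col A = dim_row B"
  shows "(A * B) $$ (i, j) = (\<Sum>k<dim_row B. A $$ (i, k) * B $$ (k, j))"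
  using assms by (simp add: scalar_prod_def atLeast0LessThan)

lemma index_mult_mat_vec_sum:
  assumes "A \<in> carrier_mat r c" "v \<in> carrier_vec c" "i < r"
  shows "(A *\<^sub>v v) $ i = (\<Sum>k<c. A $$ (i, k) * v $ k)"
  using assms by (auto simp: scalar_prod_def atLeast0LessThan intro!: sum.cong)

lemma index_mult_mat_triple:
  assumes "A \<in> carrier_mat n n" "B \<in> carrier_mat n n" "C \<in> carrier_mat n n" "a < n" "b < n"
  shows "(A * B * C) $$ (a, b) = (\<Sum>x<n. \<Sum>y<n. A $$ (a, x) * B $$ (x, y) * C $$ (y, b))"
proof -
  have "(A * B * C) $$ (a, b) = (\<Sum>x<n. A $$ (a, x) * (\<Sum>y<n. B $$ (x, y) * C $$ (y, b)))"
    using assms by (simp add: scalar_prod_def atLeast0LessThan)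
  then show ?thesis by (simp add: sum_distrib_left mult.assoc)
qed

lemma dim_mat_adjoint [simp]:
  "dim_row (mat_adjoint A) = dim_col A" "dim_col (mat_adjoint A) = dim_row A"
  by (simp_all add: mat_adjoint_def)

lemma mat_adjoint_carrier [simp]: "A \<in> carrier_mat n m \<Longrightarrow> mat_adjoint A \<in> carrier_mat m n"
  by auto

lemma index_mat_adjoint:
  "i < dim_col A \<Longrightarrow> j < dim_row A \<Longrightarrow> mat_adjoint A $$ (i, j) = cnj (A $$ (j, i))"
  by (simp add: mat_adjoint_def mat_of_rows_def conjugate_vec_def)

lemma row_mat_adjoint:
  "i < dim_col A \<Longrightarrow> row (mat_adjoint A) i = conjugate (col A i)" for A :: "complex mat"
  by (rule eq_vecI) (auto simp: index_mat_adjoint conjugate_complex_def)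

lemma mat_adjoint_mat_adjoint [simp]: "mat_adjoint (mat_adjoint A) = (A :: complex mat)"
  by (rule eq_matI) (auto simp: index_mat_adjoint)

lemma mat_adjoint_one [simp]: "mat_adjoint (1\<^sub>m n :: complex mat) = 1\<^sub>m n"
  by (rule eq_matI) (auto simp: index_mat_adjoint)

lemma mat_adjoint_smult: "mat_adjoint (c \<cdot>\<^sub>m A) = cnj c \<cdot>\<^sub>m mat_adjoint (A :: complex mat)"
  by (rule eq_matI) (auto simp: index_mat_adjoint)

lemma smult_smult_mat: "a \<cdot>\<^sub>m (b \<cdot>\<^sub>m A) = (a * b :: 'a :: semigroup_mult) \<cdot>\<^sub>m A"
  by (rule eq_matI) (simp_all add: mult.assoc)

lemma smult_mult_smult_mat:
  assumes "A \<in> carrier_mat n m" "B \<in> carrier_mat m p"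
  shows "(a \<cdot>\<^sub>m A) * (b \<cdot>\<^sub>m B) = (a * b :: 'a :: comm_ring) \<cdot>\<^sub>m (A * B)"
  using mult_smult_assoc_mat[OF assms(1) smult_carrier_mat[OF assms(2)]] mult_smult_distrib[OF assms]
  by (simp add: smult_smult_mat)

lemma mat_adjoint_mult:
  fixes A B :: "complex mat"
  assumes A: "A \<in> carrier_mat n m" and B: "B \<in> carrier_mat m p"
  shows "mat_adjoint (A * B) = mat_adjoint B * mat_adjoint A"
proof (rule eq_matI)
  fix i j assume "i < dim_row (mat_adjoint B * mat_adjoint A)" "j < dim_col (mat_adjoint B * mat_adjoint A)"
  then have i: "i < p" and j: "j < n" using A B by auto
  have "mat_adjoint (A * B) $$ (i, j) = cnj (\<Sum>k<m. A $$ (j, k) * B $$ (k, i))"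
    using A B i j by (simp add: index_mat_adjoint scalar_prod_def atLeast0LessThan)
  also have "\<dots> = (mat_adjoint B * mat_adjoint A) $$ (i, j)"
    using A B i j by (simp add: index_mat_adjoint scalar_prod_def atLeast0LessThan mult.commute)
  finally show "mat_adjoint (A * B) $$ (i, j) = (mat_adjoint B * mat_adjoint A) $$ (i, j)" .
qed (use A B in auto)

lemma mtrace_mult_commute:
  assumes A: "A \<in> carrier_mat n m" and B: "B \<in> carrier_mat m n"
  shows "mtrace (A * B) = mtrace (B * A)"
proof -
  have "mtrace (A * B) = (\<Sum>i<n. \<Sum>k<m. A $$ (i, k) * B $$ (k, i))"
    using A B by (simp add: mtrace_def scalar_prod_def atLeast0LessThan)
  also have "\<dots> = (\<Sum>k<m. \<Sum>i<n. B $$ (k, i) * A $$ (i, k))"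
    by (subst sum.swap) (simp add: mult.commute)
  also have "\<dots> = mtrace (B * A)"
    using A B by (simp add: mtrace_def scalar_prod_def atLeast0LessThan)
  finally show ?thesis .
qed

lemma ketbra_carrier: "\<psi> \<in> carrier_vec n \<Longrightarrow> ketbra \<psi> \<in> carrier_mat n n"
  by (simp add: ketbra_def)

lemma mtrace_ketbra_mult:
  assumes "\<psi> \<in> carrier_vec n" "Z \<in> carrier_mat n n"
  shows "mtrace (ketbra \<psi> * Z) = conjugate \<psi> \<bullet> (Z *\<^sub>v \<psi>)"
proof -
  have "mtrace (ketbra \<psi> * Z) = (\<Sum>i<n. \<Sum>c<n. \<psi> $ i * cnj (\<psi> $ c) * Z $$ (c, i))"
    using assms by (simp add: mtrace_def scalar_prod_def atLeast0LessThan ketbra_def)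
  also have "\<dots> = (\<Sum>c<n. cnj (\<psi> $ c) * (\<Sum>i<n. Z $$ (c, i) * \<psi> $ i))"
    by (subst sum.swap) (simp add: sum_distrib_left mult_ac)
  also have "\<dots> = conjugate \<psi> \<bullet> (Z *\<^sub>v \<psi>)"
    using assms by (simp add: scalar_prod_def atLeast0LessThan index_mult_mat_vec_sum)
  finally show ?thesis .
qed

lemma scalar_prod_mat_adjoint:
  fixes C D :: "complex mat"
  assumes C: "C \<in> carrier_mat r n" and D: "D \<in> carrier_mat r n" and v: "v \<in> carrier_vec n"
  shows "conjugate v \<bullet> ((mat_adjoint C * D) *\<^sub>v v) = conjugate (C *\<^sub>v v) \<bullet> (D *\<^sub>v v)"
proof -
  have "conjugate v \<bullet> ((mat_adjoint C * D) *\<^sub>v v)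
      = (\<Sum>c<n. \<Sum>b<n. \<Sum>e<r. cnj (v $ c) * cnj (C $$ (e, c)) * D $$ (e, b) * v $ b)"
    using assms by (simp add: scalar_prod_def atLeast0LessThan index_mult_mat_vec_sum
        index_mat_adjoint sum_distrib_left sum_distrib_right mult_ac)
  also have "\<dots> = (\<Sum>e<r. \<Sum>c<n. \<Sum>b<n. cnj (v $ c) * cnj (C $$ (e, c)) * D $$ (e, b) * v $ b)"
    by (simp add: sum.swap[where A = "{..<r}"])
  also have "\<dots> = conjugate (C *\<^sub>v v) \<bullet> (D *\<^sub>v v)"
    using assms by (simp add: scalar_prod_def atLeast0LessThan index_mult_mat_vec_sum
        sum_distrib_left sum_distrib_right mult_ac)
  finally show ?thesis .
qed

section \<open>The symmetrizer\<close>

definition sym_coeff :: "nat list \<Rightarrow> nat list \<Rightarrow> real" where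
  "sym_coeff xs ys = (\<Sum>\<sigma> | \<sigma> permutes {..<length ys}. if xs = permute_list \<sigma> ys then 1 else 0)
     / fact (length ys)"

lemma sym_coeff_mset_right:
  assumes "mset ys = mset ys'"
  shows "sym_coeff xs ys = sym_coeff xs ys'"
proof -
  obtain \<tau> where \<tau>: "\<tau> permutes {..<length ys}" "permute_list \<tau> ys = ys'"
    using mset_eq_permutation[OF assms[symmetric]] by blast
  have len: "length ys' = length ys" using \<tau>(2) by auto
  have "(\<Sum>\<sigma> | \<sigma> permutes {..<length ys}. if xs = permute_list \<sigma> ys' then 1 else 0)
      = (\<Sum>\<sigma> | \<sigma> permutes {..<length ys}. if xs = permute_list (\<tau> \<circ> \<sigma>) ys then 1 else (0::real))"
    by (intro sum.cong) (auto simp: permute_list_compose \<tau>(2)[symmetric])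
  also have "\<dots> = (\<Sum>\<sigma> | \<sigma> permutes {..<length ys}. if xs = permute_list \<sigma> ys then 1 else 0)"
    by (rule setum_permutations_compose_left[OF \<tau>(1), symmetric])
  finally show ?thesis unfolding sym_coeff_def len by simp
qed

lemma permute_list_inv_eq_iff:
  assumes "\<sigma> permutes {..<length ys}" "length xs = length ys"
  shows "xs = permute_list (Hilbert_Choice.inv \<sigma>) ys \<longleftrightarrow> ys = permute_list \<sigma> xs"
proof -
  have inv: "Hilbert_Choice.inv \<sigma> permutes {..<length ys}" using permutes_inv[OF assms(1)] .
  have "permute_list \<sigma> (permute_list (Hilbert_Choice.inv \<sigma>) ys) = ys"
    using assms permute_list_compose[of \<sigma> ys "Hilbert_Choice.inv \<sigma>"] permutes_inv_o(2)[OF assms(1)]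
    by simp
  moreover have "permute_list (Hilbert_Choice.inv \<sigma>) (permute_list \<sigma> xs) = xs"
    using assms inv permute_list_compose[of "Hilbert_Choice.inv \<sigma>" xs \<sigma>] permutes_inv_o(1)[OF assms(1)]
    by simp
  ultimately show ?thesis by metis
qed

lemma sym_coeff_commute:
  assumes "length xs = length ys"
  shows "sym_coeff xs ys = sym_coeff ys xs"
proof -
  have "(\<Sum>\<sigma> | \<sigma> permutes {..<length ys}. if xs = permute_list \<sigma> ys then 1 else 0)
      = (\<Sum>\<sigma> | \<sigma> permutes {..<length ys}. if xs = permute_list (Hilbert_Choice.inv \<sigma>) ys then 1 else (0::real))"
    by (rule sum_permutations_inverse)
  also have "\<dots> = (\<Sum>\<sigma> | \<sigma> permutes {..<length ys}. if ys = permute_list \<sigma> xs then 1 else 0)"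
    using assms by (intro sum.cong) (auto simp: permute_list_inv_eq_iff)
  finally show ?thesis unfolding sym_coeff_def using assms by simp
qed

lemma sym_coeff_mset_left:
  "length xs = length ys \<Longrightarrow> mset xs = mset xs' \<Longrightarrow> sym_coeff xs ys = sym_coeff xs' ys"
  by (metis sym_coeff_commute sym_coeff_mset_right mset_eq_length)

lemma sym_coeff_eq_0: "mset xs \<noteq> mset ys \<Longrightarrow> sym_coeff xs ys = 0"
  by (auto simp: sym_coeff_def intro!: sum.neutral)

lemma sym_coeff_self_pos: "0 < sym_coeff ys ys"
proof -
  have "(1::real) \<le> (\<Sum>\<sigma> | \<sigma> permutes {..<length ys}. if ys = permute_list \<sigma> ys then 1 else 0)"
    using member_le_sum[of id "{\<sigma>. \<sigma> permutes {..<length ys}}" "\<lambda>\<sigma>. if ys = permute_list \<sigma> ys then 1 else 0::real"]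
    by (simp add: permutes_id finite_permutations)
  then show ?thesis unfolding sym_coeff_def by (simp add: order.strict_trans2)
qed

lemma symP_carrier [simp]: "symP N n \<in> carrier_mat (N ^ n) (N ^ n)"
  by (simp add: symP_def)

lemma dim_symP [simp]: "dim_row (symP N n) = N ^ n" "dim_col (symP N n) = N ^ n"
  by (simp_all add: symP_def)

lemma symP_index:
  assumes "a < N ^ n" "b < N ^ n"
  shows "symP N n $$ (a, b) = complex_of_real (sym_coeff (to_digits N n a) (to_digits N n b))"
proof -
  have "(\<forall>j<n. digit N n a j = digit N n b (\<sigma> j)) \<longleftrightarrow> to_digits N n a = permute_list \<sigma> (to_digits N n b)"
    if "\<sigma> permutes {..<n}" for \<sigma>
    using that permutes_in_image[OF that] by (auto simp: list_eq_iff_nth_eq permute_list_nth)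
  then have "card {\<sigma>. \<sigma> permutes {..<n} \<and> (\<forall>j<n. digit N n a j = digit N n b (\<sigma> j))}
      = (\<Sum>\<sigma> | \<sigma> permutes {..<n}. if to_digits N n a = permute_list \<sigma> (to_digits N n b) then 1 else 0)"
    by (simp add: sum.If_cases finite_permutations Collect_conj_eq[symmetric] conj_commute cong: conj_cong)
  then show ?thesis using assms by (simp add: symP_def sym_coeff_def if_distrib cong: if_cong)
qed

lemma sum_mult_symP_invariant:
  assumes N: "0 < N" and c: "c < N ^ q"
    and g: "\<And>us vs. mset us = mset vs \<Longrightarrow> g us = g vs"
  shows "(\<Sum>y<N ^ q. g (to_digits N q y) * symP N q $$ (y, c)) = (g (to_digits N q c) :: complex)"
proof -
  let ?L = "to_digits N q c" and ?S = "{\<sigma>. \<sigma> permutes {..<q}}"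
  let ?\<delta> = "\<lambda>us \<sigma>. g us * (if us = permute_list \<sigma> ?L then 1 else 0)"
  have "(\<Sum>y<N ^ q. g (to_digits N q y) * symP N q $$ (y, c))
      = (\<Sum>us\<in>idx_lists N q. g us * of_real (sym_coeff us ?L))"
    using c by (simp add: symP_index sum_to_digits[OF N, of "\<lambda>us. g us * of_real (sym_coeff us ?L)"])
  also have "\<dots> = (\<Sum>us\<in>idx_lists N q. (\<Sum>\<sigma>\<in>?S. ?\<delta> us \<sigma>) / fact q)"
    by (simp add: sym_coeff_def sum_distrib_left if_distrib[of complex_of_real] cong: if_cong)
  also have "\<dots> = (\<Sum>\<sigma>\<in>?S. \<Sum>us\<in>idx_lists N q. ?\<delta> us \<sigma>) / fact q"
    by (subst sum.swap) (simp add: sum_divide_distrib)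
  also have "\<dots> = (\<Sum>\<sigma>\<in>?S. g ?L) / fact q"
  proof (intro arg_cong2[where f = "(/)"] sum.cong refl)
    fix \<sigma> assume "\<sigma> \<in> ?S"
    then have "permute_list \<sigma> ?L \<in> idx_lists N q" and "g (permute_list \<sigma> ?L) = g ?L"
      using set_to_digits[OF N] by (auto simp: idx_lists_def intro: g)
    then show "(\<Sum>us\<in>idx_lists N q. ?\<delta> us \<sigma>) = g ?L"
      by (simp add: finite_idx_lists if_distrib[of "times (g _)"] cong: if_cong)
  qed
  also have "\<dots> = g ?L" using card_permutations[of "{..<q}" q] by simp
  finally show ?thesis .
qed

lemma mat_adjoint_symP: "mat_adjoint (symP N n) = symP N n"
  by (rule eq_matI) (auto simp: index_mat_adjoint symP_index sym_coeff_commute)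

lemma symP_from_digits:
  assumes "a < N ^ p" "set us \<subseteq> {..<N}" "length us = p"
  shows "symP N p $$ (a, from_digits N us) = complex_of_real (sym_coeff (to_digits N p a) us)"
  using assms(1,2) from_digits_less[OF assms(2)] to_digits_from_digits[OF assms(2)]
  unfolding assms(3)[symmetric] by (simp add: symP_index)

lemma sum_symP_infix:
  assumes N: "0 < N" and p: "p = length xs + q + length zs" and a: "a < N ^ p" and c: "c < N ^ q"
    and xs: "set xs \<subseteq> {..<N}" and zs: "set zs \<subseteq> {..<N}"
  shows "(\<Sum>y<N ^ q. symP N p $$ (a, from_digits N (xs @ to_digits N q y @ zs)) * symP N q $$ (y, c))
       = symP N p $$ (a, from_digits N (xs @ to_digits N q c @ zs))"
proof -
  let ?g = "\<lambda>us. complex_of_real (sym_coeff (to_digits N p a) (xs @ us @ zs))"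
  have entry: "symP N p $$ (a, from_digits N (xs @ to_digits N q y @ zs)) = ?g (to_digits N q y)" for y
    using xs zs set_to_digits[OF N] p by (intro symP_from_digits[OF a]) auto
  have "(\<Sum>y<N ^ q. ?g (to_digits N q y) * symP N q $$ (y, c)) = ?g (to_digits N q c)"
    by (rule sum_mult_symP_invariant[OF N c]) (intro arg_cong[where f = of_real] sym_coeff_mset_right, simp)
  then show ?thesis by (simp only: entry)
qed

text \<open>The map x \<mapsto> P_(n+|js|) (e_js \<otimes> x) from (C^N)^(\<otimes>n) to (C^N)^(\<otimes>(n+|js|)).\<close>
definition sym_prepend :: "nat \<Rightarrow> nat \<Rightarrow> nat list \<Rightarrow> complex mat" where
  "sym_prepend N n js = mat (N ^ (n + length js)) (N ^ n)
     (\<lambda>(a, b). symP N (n + length js) $$ (a, from_digits N (js @ to_digits N n b)))"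

lemma dim_sym_prepend [simp]:
  "dim_row (sym_prepend N n js) = N ^ (n + length js)" "dim_col (sym_prepend N n js) = N ^ n"
  by (simp_all add: sym_prepend_def)

lemma sym_prepend_carrier [simp]: "sym_prepend N n js \<in> carrier_mat (N ^ (n + length js)) (N ^ n)"
  by (simp add: carrier_matI)

lemma sym_prepend_mset:
  assumes N: "0 < N" and js: "set js \<subseteq> {..<N}" and mset: "mset js = mset ks"
  shows "sym_prepend N n js = sym_prepend N n ks"
proof (rule eq_matI)
  have len: "length ks = length js" using mset_eq_length[OF mset] by simp
  have ks: "set ks \<subseteq> {..<N}" using js mset_eq_setD[OF mset] by simp
  fix a b assume "a < dim_row (sym_prepend N n ks)" "b < dim_col (sym_prepend N n ks)"
  then have a: "a < N ^ (n + length js)" and b: "b < N ^ n" using len by simp_all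
  have "symP N (n + length js) $$ (a, from_digits N (us @ to_digits N n b))
      = of_real (sym_coeff (to_digits N (n + length js) a) (us @ to_digits N n b))"
    if "set us \<subseteq> {..<N}" "length us = length js" for us
    using that set_to_digits[OF N] by (intro symP_from_digits[OF a]) auto
  then show "sym_prepend N n js $$ (a, b) = sym_prepend N n ks $$ (a, b)"
    using a b js ks len mset sym_coeff_mset_right[of "js @ to_digits N n b" "ks @ to_digits N n b"]
    by (simp add: sym_prepend_def)
qed (simp_all add: sym_prepend_def mset_eq_length[OF assms(3)])

lemma sym_prepend_mult:
  assumes N: "0 < N" and js: "set js \<subseteq> {..<N}" and ks: "set ks \<subseteq> {..<N}"
  shows "sym_prepend N (n + length ks) js * sym_prepend N n ks = sym_prepend N n (js @ ks)"
proof (rule eq_matI)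
  let ?p = "n + length (js @ ks)" and ?q = "n + length ks"
  fix a b assume "a < dim_row (sym_prepend N n (js @ ks))" "b < dim_col (sym_prepend N n (js @ ks))"
  then have a: "a < N ^ ?p" and b: "b < N ^ n" by (simp_all add: sym_prepend_def)
  let ?c = "from_digits N (ks @ to_digits N n b)"
  have c: "?c < N ^ ?q" by (rule from_digits_append_less[OF ks b])
  have dc: "to_digits N ?q ?c = ks @ to_digits N n b"
    using to_digits_from_digits[of "ks @ to_digits N n b" N] ks set_to_digits[OF N] by (simp add: add.commute)
  have "(sym_prepend N ?q js * sym_prepend N n ks) $$ (a, b)
      = (\<Sum>y<N ^ ?q. symP N ?p $$ (a, from_digits N (js @ to_digits N ?q y @ [])) * symP N ?q $$ (y, ?c))"
    using a b by (subst index_mult_mat_sum) (auto simp: sym_prepend_def ac_simps)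
  also have "\<dots> = symP N ?p $$ (a, from_digits N (js @ to_digits N ?q ?c @ []))"
    using a c js by (intro sum_symP_infix[OF N]) simp_all
  also have "\<dots> = sym_prepend N n (js @ ks) $$ (a, b)"
    using a b by (simp add: dc sym_prepend_def)
  finally show "(sym_prepend N ?q js * sym_prepend N n ks) $$ (a, b) = sym_prepend N n (js @ ks) $$ (a, b)" .
qed (simp_all add: sym_prepend_def ac_simps)

lemma sym_prepend_Nil: "sym_prepend N n [] = symP N n"
  by (rule eq_matI) (simp_all add: sym_prepend_def from_digits_to_digits)

lemma symP_mult_sym_prepend:
  assumes "0 < N" "set js \<subseteq> {..<N}"
  shows "symP N (n + length js) * sym_prepend N n js = sym_prepend N n js"
  using sym_prepend_mult[OF assms(1) _ assms(2), of "[]"] by (simp add: sym_prepend_Nil)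

lemma sym_prepend_mult_symP:
  assumes "0 < N" "set js \<subseteq> {..<N}"
  shows "sym_prepend N n js * symP N n = sym_prepend N n js"
  using sym_prepend_mult[OF assms _, of "[]"] by (simp add: sym_prepend_Nil)

lemma symP_mult_symP: "0 < N \<Longrightarrow> symP N n * symP N n = symP N n"
  using symP_mult_sym_prepend[of N "[]" n] by (simp add: sym_prepend_Nil)

section \<open>An orthonormal basis of the symmetric subspace\<close>

lemma sum_sym_coeff_square:
  assumes N: "0 < N" and r: "r < N ^ n"
  shows "(\<Sum>x<N ^ n. (sym_coeff (to_digits N n x) (to_digits N n r))\<^sup>2) = sym_coeff (to_digits N n r) (to_digits N n r)"
proof -
  have "complex_of_real (\<Sum>x<N ^ n. (sym_coeff (to_digits N n x) (to_digits N n r))\<^sup>2)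
      = (symP N n * symP N n) $$ (r, r)"
    using r by (subst index_mult_mat_sum)
      (simp_all add: symP_index power2_eq_square sym_coeff_commute[of "to_digits N n r"])
  also have "\<dots> = complex_of_real (sym_coeff (to_digits N n r) (to_digits N n r))"
    using r by (simp add: symP_mult_symP[OF N] symP_index)
  finally show ?thesis by (simp only: of_real_eq_iff)
qed

lemma vnorm_symP_col:
  assumes N: "0 < N" and r: "r < N ^ n"
  shows "vnorm (symP N n *\<^sub>v unit_vec (N ^ n) r) = sqrt (sym_coeff (to_digits N n r) (to_digits N n r))"
proof -
  have "(\<Sum>x<N ^ n. (cmod ((symP N n *\<^sub>v unit_vec (N ^ n) r) $ x))\<^sup>2)
      = (\<Sum>x<N ^ n. (sym_coeff (to_digits N n x) (to_digits N n r))\<^sup>2)"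
    using r by (intro sum.cong refl) (simp add: scalar_prod_right_unit symP_index)
  then show ?thesis unfolding vnorm_def using sum_sym_coeff_square[OF N r] by simp
qed

lemma mem_sym_reps_iff: "r \<in> set (sym_reps N n) \<longleftrightarrow> r < N ^ n \<and> sorted (to_digits N n r)"
  unfolding sym_reps_def sorted_iff_nth_Suc by auto

lemma distinct_sym_reps: "distinct (sym_reps N n)"
  by (simp add: sym_reps_def)

lemma ex1_sym_reps_mset:
  assumes N: "0 < N" and a: "a < N ^ n"
  shows "\<exists>!r. r \<in> set (sym_reps N n) \<and> mset (to_digits N n r) = mset (to_digits N n a)"
proof
  let ?r = "from_digits N (sort (to_digits N n a))"
  have st: "set (sort (to_digits N n a)) \<subseteq> {..<N}" using set_to_digits[OF N] by simp
  then have "?r < N ^ n" and dgr: "to_digits N n ?r = sort (to_digits N n a)"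
    using from_digits_less[OF st] to_digits_from_digits[OF st] by simp_all
  then show "?r \<in> set (sym_reps N n) \<and> mset (to_digits N n ?r) = mset (to_digits N n a)"
    by (simp add: mem_sym_reps_iff)
  fix r assume r: "r \<in> set (sym_reps N n) \<and> mset (to_digits N n r) = mset (to_digits N n a)"
  then have "sort (to_digits N n a) = to_digits N n r"
    using properties_for_sort[of "to_digits N n r" "to_digits N n a"] mem_sym_reps_iff by blast
  then show "r = ?r" using from_digits_to_digits r mem_sym_reps_iff by metis
qed

lemma ex1_sym_reps_index:
  assumes N: "0 < N" and a: "a < N ^ n"
  shows "\<exists>!i. i < length (sym_reps N n) \<and> mset (to_digits N n (sym_reps N n ! i)) = mset (to_digits N n a)"
proof -
  let ?R = "sym_reps N n"
  obtain r where r: "r \<in> set ?R" "mset (to_digits N n r) = mset (to_digits N n a)"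
    and r_uniq: "\<And>r'. r' \<in> set ?R \<Longrightarrow> mset (to_digits N n r') = mset (to_digits N n a) \<Longrightarrow> r' = r"
    using ex1_sym_reps_mset[OF N a] by blast
  obtain i where i: "i < length ?R" "?R ! i = r" using r(1) by (auto simp: in_set_conv_nth)
  show ?thesis
  proof (rule ex1I[of _ i])
    fix j assume j: "j < length ?R \<and> mset (to_digits N n (?R ! j)) = mset (to_digits N n a)"
    then have "?R ! j = ?R ! i" using i r_uniq[OF nth_mem] by simp
    then show "j = i" using nth_eq_iff_index_eq[OF distinct_sym_reps _ i(1)] j by simp
  qed (use i r in simp)
qed

lemma dim_symBasis [simp]:
  "dim_row (symBasis N n) = N ^ n" "dim_col (symBasis N n) = length (sym_reps N n)"
  by (simp_all add: symBasis_def)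

lemma symBasis_carrier: "symBasis N n \<in> carrier_mat (N ^ n) (length (sym_reps N n))"
  by (simp add: carrier_matI)

lemma symBasis_index:
  assumes N: "0 < N" and a: "a < N ^ n" and i: "i < length (sym_reps N n)"
  defines "r \<equiv> to_digits N n (sym_reps N n ! i)"
  shows "symBasis N n $$ (a, i) = complex_of_real (sym_coeff (to_digits N n a) r / sqrt (sym_coeff r r))"
proof -
  have "sym_reps N n ! i < N ^ n" using i mem_sym_reps_iff nth_mem by blast
  then show ?thesis using a i
    by (simp add: symBasis_def r_def mat_of_cols_index vnorm_symP_col[OF N] scalar_prod_right_unit symP_index)
qed

lemma symBasis_outer_index:
  assumes N: "0 < N" and a: "a < N ^ n" and b: "b < N ^ n" and i: "i < length (sym_reps N n)"
  shows "symBasis N n $$ (a, i) * cnj (symBasis N n $$ (b, i))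
    = (if mset (to_digits N n (sym_reps N n ! i)) = mset (to_digits N n a) then symP N n $$ (a, b) else 0)"
proof -
  let ?c = "\<lambda>x y. sym_coeff (to_digits N n x) (to_digits N n y)" and ?r = "sym_reps N n ! i"
  have pos: "0 < ?c ?r ?r" by (rule sym_coeff_self_pos)
  then have "symBasis N n $$ (a, i) * cnj (symBasis N n $$ (b, i)) = of_real (?c a ?r * ?c b ?r / ?c ?r ?r)"
    by (simp add: symBasis_index[OF N a i] symBasis_index[OF N b i] flip: of_real_mult)
  also have "\<dots> = (if mset (to_digits N n ?r) = mset (to_digits N n a) then symP N n $$ (a, b) else 0)"
  proof (cases "mset (to_digits N n ?r) = mset (to_digits N n a)")
    case True
    then have "?c a ?r = ?c ?r ?r" and "?c b ?r = ?c a b"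
      using sym_coeff_mset_left[of "to_digits N n a" "to_digits N n ?r" "to_digits N n ?r"]
        sym_coeff_mset_left[of "to_digits N n ?r" "to_digits N n b" "to_digits N n a"]
        sym_coeff_commute[of "to_digits N n b" "to_digits N n ?r"] by simp_all
    then show ?thesis using True pos a b by (simp add: symP_index)
  next
    case False
    then show ?thesis by (simp add: sym_coeff_eq_0)
  qed
  finally show ?thesis .
qed

lemma symBasis_mult_adjoint:
  assumes N: "0 < N"
  shows "symBasis N n * mat_adjoint (symBasis N n) = symP N n"
proof (rule eq_matI)
  fix a b assume "a < dim_row (symP N n)" "b < dim_col (symP N n)"
  then have a: "a < N ^ n" and b: "b < N ^ n" by auto
  let ?R = "sym_reps N n"
  let ?same = "\<lambda>j. mset (to_digits N n (?R ! j)) = mset (to_digits N n a)"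
  obtain i where i: "i < length ?R" "?same i" and uniq: "\<And>j. j < length ?R \<Longrightarrow> ?same j \<Longrightarrow> j = i"
    using ex1_sym_reps_index[OF N a] by blast
  then have same_iff: "?same j \<longleftrightarrow> j = i" if "j < length ?R" for j
    using that by blast
  have "(symBasis N n * mat_adjoint (symBasis N n)) $$ (a, b)
      = (\<Sum>j<length ?R. symBasis N n $$ (a, j) * cnj (symBasis N n $$ (b, j)))"
    using a b by (subst index_mult_mat_sum) (auto simp: index_mat_adjoint)
  also have "\<dots> = (\<Sum>j<length ?R. if ?same j then symP N n $$ (a, b) else 0)"
    by (intro sum.cong refl) (simp add: symBasis_outer_index[OF N a b])
  also have "\<dots> = (\<Sum>j<length ?R. if j = i then symP N n $$ (a, b) else 0)"
    by (intro sum.cong refl) (simp add: same_iff)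
  also have "\<dots> = symP N n $$ (a, b)" using i by simp
  finally show "(symBasis N n * mat_adjoint (symBasis N n)) $$ (a, b) = symP N n $$ (a, b)" .
qed auto

lemma kron_unit_col_one_index:
  assumes z: "z < N * N ^ n" and y: "y < N ^ n" and j: "j < N"
  shows "kron (mat_of_cols N [unit_vec N j]) (1\<^sub>m (N ^ n)) $$ (z, y) = (if z = j * N ^ n + y then 1 else 0)"
proof -
  have N: "0 < N" using j by simp
  have "z div N ^ n < N" using z by (simp add: less_mult_imp_div_less)
  moreover have "z = j * N ^ n + y \<longleftrightarrow> z div N ^ n = j \<and> z mod N ^ n = y"
    using N y div_mult_mod_eq[of z "N ^ n"] by auto
  ultimately show ?thesis using z y j by (simp add: kron_def mat_of_cols_index unit_vec_def)
qed

lemma cre_unit_vec: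
  assumes N: "0 < N" and j: "j < N"
  shows "cre N n (unit_vec N j) = complex_of_real (sqrt (real (n + 1))) \<cdot>\<^sub>m sym_prepend N n [j]"
proof -
  let ?K = "kron (mat_of_cols N [unit_vec N j]) (1\<^sub>m (N ^ n))"
  have K: "dim_row ?K = N * N ^ n" "dim_col ?K = N ^ n" by (simp_all add: kron_def)
  have "symP N (n + 1) * ?K = sym_prepend N n [j]"
  proof (rule eq_matI)
    fix a y assume "a < dim_row (sym_prepend N n [j])" "y < dim_col (sym_prepend N n [j])"
    then have a: "a < N ^ Suc n" and y: "y < N ^ n" by simp_all
    have "(symP N (n + 1) * ?K) $$ (a, y) = (\<Sum>z<N * N ^ n. if z = j * N ^ n + y then symP N (Suc n) $$ (a, z) else 0)"
      using a y j K by (subst index_mult_mat_sum)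
        (auto simp: kron_unit_col_one_index if_distrib[of "times _"] cong: if_cong intro!: sum.cong)
    also have "\<dots> = sym_prepend N n [j] $$ (a, y)"
      using a y mult_add_less[OF j y] by (simp add: sym_prepend_def from_digits_to_digits)
    finally show "(symP N (n + 1) * ?K) $$ (a, y) = sym_prepend N n [j] $$ (a, y)" .
  qed (simp_all add: K)
  then show ?thesis unfolding cre_def using sym_prepend_mult_symP[OF N, of "[j]"] j by simp
qed

lemma cre_carrier [simp]: "cre N n v \<in> carrier_mat (N ^ Suc n) (N ^ n)"
  by (simp add: cre_def carrier_matI)

lemma crs_carrier: "crs N n js \<in> carrier_mat (N ^ (n + length js)) (N ^ n)"
proof (induction js arbitrary: n)
  case (Cons j js)
  then show ?case using mult_carrier_mat[OF Cons.IH[of "Suc n"] cre_carrier[of N n]] by simp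
qed simp

lemma anns_eq_mat_adjoint_crs: "anns N n is = mat_adjoint (crs N n is)"
proof (induction "is" arbitrary: n)
  case (Cons i "is")
  then show ?case
    using mat_adjoint_mult[OF crs_carrier[of N "Suc n" "is"] cre_carrier[of N n]] by (simp add: ann_def)
qed simp

text \<open>The normalisation sqrt((n+k)!/n!) = sqrt(n+1) \<cdots> sqrt(n+k) picked up by k creation operators.\<close>
definition creation_factor :: "nat \<Rightarrow> nat \<Rightarrow> complex" where
  "creation_factor n k = complex_of_real (sqrt (fact (n + k) / fact n))"

lemma creation_factor_Suc:
  "complex_of_real (sqrt (real (n + 1))) * creation_factor (Suc n) k = creation_factor n (Suc k)"
proof -
  have "real (n + 1) * (fact (Suc n + k) / fact (Suc n)) = fact (n + Suc k) / fact n"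
    by (simp only: fact_Suc[of n] add_Suc_shift of_nat_mult Suc_eq_plus1) simp
  then show ?thesis unfolding creation_factor_def by (simp flip: of_real_mult real_sqrt_mult)
qed

lemma crs_mult_symP:
  assumes N: "0 < N"
  shows "set js \<subseteq> {..<N} \<Longrightarrow> crs N n js * symP N n = creation_factor n (length js) \<cdot>\<^sub>m sym_prepend N n js"
proof (induction js arbitrary: n)
  case Nil
  then show ?case by (intro eq_matI) (simp_all add: creation_factor_def sym_prepend_Nil)
next
  case (Cons j js)
  then have j: "j < N" and js: "set js \<subseteq> {..<N}" by auto
  let ?s = "complex_of_real (sqrt (real (n + 1)))" and ?C = "crs N (Suc n) js"
  let ?F = "sym_prepend N n [j]" and ?c = "creation_factor (Suc n) (length js)"
  have C: "?C \<in> carrier_mat (N ^ (Suc n + length js)) (N ^ Suc n)" by (rule crs_carrier)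
  have F: "?F \<in> carrier_mat (N ^ Suc n) (N ^ n)" using sym_prepend_carrier[of N n "[j]"] by simp
  have "crs N n (j # js) * symP N n = ?s \<cdot>\<^sub>m (?C * (?F * symP N n))"
    using cre_unit_vec[OF N j] mult_smult_distrib[OF C F]
      mult_smult_assoc_mat[OF mult_carrier_mat[OF C F] symP_carrier] assoc_mult_mat[OF C F symP_carrier]
    by simp
  also have "?F * symP N n = symP N (Suc n) * ?F"
    using sym_prepend_mult_symP[OF N, of "[j]"] symP_mult_sym_prepend[OF N, of "[j]"] j by simp
  also have "?C * (symP N (Suc n) * ?F) = (?c \<cdot>\<^sub>m sym_prepend N (Suc n) js) * ?F"
    using C F Cons.IH[OF js] by (simp flip: assoc_mult_mat[OF C symP_carrier F])
  also have "\<dots> = ?c \<cdot>\<^sub>m sym_prepend N n (js @ [j])"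
    using sym_prepend_mult[OF N js, of "[j]" n] j mult_smult_assoc_mat[OF sym_prepend_carrier F] by simp
  also have "sym_prepend N n (js @ [j]) = sym_prepend N n (j # js)"
    using js j by (intro sym_prepend_mset[OF N]) auto
  finally show ?case using creation_factor_Suc[of n "length js"] by (simp add: smult_smult_mat)
qed

section \<open>Factorization of T and W through one operator\<close>

lemma kron_one_col_carrier:
  "kron (1\<^sub>m (N ^ k)) (mat_of_cols (N ^ M) [\<psi>]) \<in> carrier_mat (N ^ (M + k)) (N ^ k)"
  by (simp add: kron_def carrier_matI power_add mult.commute)

definition sym_tensor :: "nat \<Rightarrow> nat \<Rightarrow> nat \<Rightarrow> complex vec \<Rightarrow> complex mat" where
  "sym_tensor N M k \<psi> = creation_factor M k \<cdot>\<^sub>m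
     (symP N (M + k) * kron (1\<^sub>m (N ^ k)) (mat_of_cols (N ^ M) [\<psi>]))"

lemma sym_tensor_carrier [simp]: "sym_tensor N M k \<psi> \<in> carrier_mat (N ^ (M + k)) (N ^ k)"
  unfolding sym_tensor_def by (intro smult_carrier_mat mult_carrier_mat[OF symP_carrier kron_one_col_carrier])

lemma dim_sym_tensor [simp]:
  "dim_row (sym_tensor N M k \<psi>) = N ^ (M + k)" "dim_col (sym_tensor N M k \<psi>) = N ^ k"
  using sym_tensor_carrier by (blast dest: carrier_matD)+

lemma sym_tensor_index:
  assumes a: "a < N ^ (M + k)" and x: "x < N ^ k"
  shows "sym_tensor N M k \<psi> $$ (a, x)
    = creation_factor M k * (\<Sum>z<N ^ M. symP N (M + k) $$ (a, x * N ^ M + z) * \<psi> $ z)"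
proof -
  let ?K = "kron (1\<^sub>m (N ^ k)) (mat_of_cols (N ^ M) [\<psi>])"
  have "0 < N ^ M" using a by (metis gr_zeroI less_nat_zero_code nat_0_less_mult_iff power_add)
  then have K: "?K $$ (y * N ^ M + z, x) = (if y = x then \<psi> $ z else 0)" if "y < N ^ k" "z < N ^ M" for y z
    using that x mult_add_less[OF that] by (simp add: kron_def mat_of_cols_index)
  have dK: "dim_row ?K = N ^ k * N ^ M" by (simp add: kron_def)
  have "(symP N (M + k) * ?K) $$ (a, x) = (\<Sum>y<N ^ k * N ^ M. symP N (M + k) $$ (a, y) * ?K $$ (y, x))"
    using a x kron_one_col_carrier[of N k M \<psi>] dK by (subst index_mult_mat_sum) auto
  also have "\<dots> = (\<Sum>y<N ^ k. \<Sum>z<N ^ M. symP N (M + k) $$ (a, y * N ^ M + z) * (if y = x then \<psi> $ z else 0))"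
    by (simp add: sum_lessThan_mult K)
  also have "\<dots> = (\<Sum>z<N ^ M. symP N (M + k) $$ (a, x * N ^ M + z) * \<psi> $ z)"
    using x by (subst sum.swap) (simp add: if_distrib[of "times _"] cong: if_cong)
  finally show ?thesis using a x kron_one_col_carrier[of N k M \<psi>] by (simp add: sym_tensor_def)
qed

lemma symP_mult_sym_tensor:
  assumes "0 < N"
  shows "symP N (M + k) * sym_tensor N M k \<psi> = sym_tensor N M k \<psi>"
proof -
  let ?P = "symP N (M + k)" and ?K = "kron (1\<^sub>m (N ^ k)) (mat_of_cols (N ^ M) [\<psi>])"
  have "?P * (?P * ?K) = ?P * ?K"
    using assoc_mult_mat[OF symP_carrier symP_carrier kron_one_col_carrier[of N k M \<psi>]]
      symP_mult_symP[OF assms, of "M + k"] by simp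
  then show ?thesis
    unfolding sym_tensor_def
    using mult_smult_distrib[OF symP_carrier mult_carrier_mat[OF symP_carrier kron_one_col_carrier[of N k M \<psi>]]]
    by simp
qed

lemma sym_tensor_mult_symP:
  assumes N: "0 < N"
  shows "sym_tensor N M k \<psi> * symP N k = sym_tensor N M k \<psi>"
proof (rule eq_matI)
  let ?Q = "sym_tensor N M k \<psi>" and ?P = "symP N (M + k)"
  fix a x assume "a < dim_row ?Q" "x < dim_col ?Q"
  then have a: "a < N ^ (M + k)" and x: "x < N ^ k" by simp_all
  have inner: "(\<Sum>y<N ^ k. ?P $$ (a, y * N ^ M + z) * symP N k $$ (y, x)) = ?P $$ (a, x * N ^ M + z)"
    if z: "z < N ^ M" for z
  proof -
    have "(\<Sum>y<N ^ k. ?P $$ (a, y * N ^ M + z) * symP N k $$ (y, x))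
        = (\<Sum>y<N ^ k. ?P $$ (a, from_digits N ([] @ to_digits N k y @ to_digits N M z)) * symP N k $$ (y, x))"
      using z by (intro sum.cong refl) (simp add: from_digits_to_digits_append)
    also have "\<dots> = ?P $$ (a, from_digits N ([] @ to_digits N k x @ to_digits N M z))"
      by (rule sum_symP_infix[OF N _ a x]) (simp_all add: set_to_digits[OF N])
    finally show ?thesis using x z by (simp add: from_digits_to_digits_append)
  qed
  have "(?Q * symP N k) $$ (a, x) = (\<Sum>y<N ^ k. ?Q $$ (a, y) * symP N k $$ (y, x))"
    using a x by (subst index_mult_mat_sum) auto
  also have "\<dots> = creation_factor M k
      * (\<Sum>z<N ^ M. (\<Sum>y<N ^ k. ?P $$ (a, y * N ^ M + z) * symP N k $$ (y, x)) * \<psi> $ z)"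
    using a by (simp add: sym_tensor_index sum_distrib_left sum_distrib_right sum.swap[of _ "{..<N ^ k}"] mult_ac)
  also have "\<dots> = ?Q $$ (a, x)"
    using a x by (simp add: inner sym_tensor_index)
  finally show "(?Q * symP N k) $$ (a, x) = ?Q $$ (a, x)" .
qed auto

lemma crs_mult_vec_eq_col_sym_tensor:
  assumes N: "0 < N" and js: "set js \<subseteq> {..<N}" "length js = k"
    and \<psi>: "\<psi> \<in> carrier_vec (N ^ M)" and P\<psi>: "symP N M *\<^sub>v \<psi> = \<psi>"
  shows "crs N M js *\<^sub>v \<psi> = col (sym_tensor N M k \<psi>) (from_digits N js)"
proof -
  have C: "crs N M js \<in> carrier_mat (N ^ (M + k)) (N ^ M)" using crs_carrier[of N M js] js by simp
  have x: "from_digits N js < N ^ k" using from_digits_less[OF js(1)] js by simp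
  have "crs N M js *\<^sub>v \<psi> = (crs N M js * symP N M) *\<^sub>v \<psi>"
    using assoc_mult_mat_vec[OF C symP_carrier \<psi>] P\<psi> by simp
  also have "\<dots> = (creation_factor M k \<cdot>\<^sub>m sym_prepend N M js) *\<^sub>v \<psi>"
    using crs_mult_symP[OF N js(1)] js by simp
  also have "\<dots> = col (sym_tensor N M k \<psi>) (from_digits N js)"
  proof (rule eq_vecI)
    fix a assume "a < dim_vec (col (sym_tensor N M k \<psi>) (from_digits N js))"
    then have a: "a < N ^ (M + k)" by simp
    have F: "creation_factor M k \<cdot>\<^sub>m sym_prepend N M js \<in> carrier_mat (N ^ (M + k)) (N ^ M)"
      using sym_prepend_carrier[of N M js] js by simp
    have "((creation_factor M k \<cdot>\<^sub>m sym_prepend N M js) *\<^sub>v \<psi>) $ a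
        = (\<Sum>z<N ^ M. creation_factor M k * symP N (M + k) $$ (a, from_digits N js * N ^ M + z) * \<psi> $ z)"
      using a js by (subst index_mult_mat_vec_sum[OF F \<psi> a])
        (auto simp: sym_prepend_def from_digits_append from_digits_to_digits intro!: sum.cong)
    then show "((creation_factor M k \<cdot>\<^sub>m sym_prepend N M js) *\<^sub>v \<psi>) $ a
        = col (sym_tensor N M k \<psi>) (from_digits N js) $ a"
      using a x by (simp add: sym_tensor_index sum_distrib_left mult.assoc)
  qed (use x js in simp)
  finally show ?thesis .
qed

lemma kron_one_ketbra:
  assumes \<psi>: "\<psi> \<in> carrier_vec m"
  shows "kron (1\<^sub>m n) (ketbra \<psi>) = kron (1\<^sub>m n) (mat_of_cols m [\<psi>]) * mat_adjoint (kron (1\<^sub>m n) (mat_of_cols m [\<psi>]))"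
    (is "_ = ?K * mat_adjoint ?K")
proof (rule eq_matI)
  have dim: "dim_vec \<psi> = m" using \<psi> by simp
  have K: "?K \<in> carrier_mat (n * m) n" by (simp add: kron_def carrier_matI)
  fix i j assume "i < dim_row (?K * mat_adjoint ?K)" "j < dim_col (?K * mat_adjoint ?K)"
  then have i: "i < n * m" and j: "j < n * m" using K by auto
  then have m: "0 < m" by (cases m) auto
  have Ki: "?K $$ (i', y) = (if i' div m = y then \<psi> $ (i' mod m) else 0)" if "i' < n * m" "y < n" for i' y
    using that m less_mult_imp_div_less[of i' n m] by (simp add: kron_def mat_of_cols_index mult.commute)
  let ?x = "\<psi> $ (i mod m) * cnj (\<psi> $ (j mod m))"
  have "(?K * mat_adjoint ?K) $$ (i, j) = (\<Sum>y<n. ?K $$ (i, y) * cnj (?K $$ (j, y)))"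
    using i j K by (subst index_mult_mat_sum) (auto simp: index_mat_adjoint)
  also have "\<dots> = (\<Sum>y<n. if y = i div m \<and> y = j div m then ?x else 0)"
    using i j by (intro sum.cong refl) (auto simp: Ki)
  also have "\<dots> = (if i div m = j div m then ?x else 0)"
    using less_mult_imp_div_less[of i n m] i by (cases "i div m = j div m") (auto intro: sum.neutral)
  also have "\<dots> = kron (1\<^sub>m n) (ketbra \<psi>) $$ (i, j)"
    using i j m less_mult_imp_div_less[of _ n m] by (simp add: kron_def ketbra_def dim mult.commute)
  finally show "kron (1\<^sub>m n) (ketbra \<psi>) $$ (i, j) = (?K * mat_adjoint ?K) $$ (i, j)" ..
qed (simp_all add: kron_def ketbra_def \<psi>)

lemma opT_ketbra:
  assumes \<psi>: "\<psi> \<in> carrier_vec (N ^ M)"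
  shows "opT N M k (ketbra \<psi>) = sym_tensor N M k \<psi> * mat_adjoint (sym_tensor N M k \<psi>)"
proof -
  let ?P = "symP N (M + k)" and ?K = "kron (1\<^sub>m (N ^ k)) (mat_of_cols (N ^ M) [\<psi>])"
  let ?c = "creation_factor M k"
  have K: "?K \<in> carrier_mat (N ^ (M + k)) (N ^ k)" by (rule kron_one_col_carrier)
  have KH: "mat_adjoint ?K \<in> carrier_mat (N ^ k) (N ^ (M + k))" using K by simp
  have PK: "?P * ?K \<in> carrier_mat (N ^ (M + k)) (N ^ k)" using mult_carrier_mat[OF symP_carrier K] .
  have "sym_tensor N M k \<psi> * mat_adjoint (sym_tensor N M k \<psi>) = (?c * cnj ?c) \<cdot>\<^sub>m ((?P * ?K) * (mat_adjoint ?K * ?P))"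
    unfolding sym_tensor_def mat_adjoint_smult mat_adjoint_mult[OF symP_carrier K] mat_adjoint_symP
    by (rule smult_mult_smult_mat[OF PK mult_carrier_mat[OF KH symP_carrier]])
  also have "(?P * ?K) * (mat_adjoint ?K * ?P) = ?P * (?K * mat_adjoint ?K) * ?P"
    using assoc_mult_mat[OF PK KH symP_carrier] assoc_mult_mat[OF symP_carrier K KH] by simp
  also have "?K * mat_adjoint ?K = kron (1\<^sub>m (N ^ k)) (ketbra \<psi>)"
    by (rule kron_one_ketbra[OF \<psi>, symmetric])
  also have "?c * cnj ?c = of_nat (fact (M + k)) / of_nat (fact M)"
    by (simp add: creation_factor_def flip: of_real_mult)
  finally show ?thesis unfolding opT_def ..
qed

lemma traceH_ketbra_mult:
  assumes N: "0 < N" and \<psi>: "\<psi> \<in> carrier_vec (N ^ n)" and P\<psi>: "symP N n *\<^sub>v \<psi> = \<psi>"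
    and Y: "Y \<in> carrier_mat (N ^ n) (N ^ n)"
  shows "traceH N n (ketbra \<psi> * Y) = conjugate \<psi> \<bullet> (Y *\<^sub>v \<psi>)"
proof -
  let ?S = "symBasis N n" and ?X = "ketbra \<psi> * Y"
  have S: "?S \<in> carrier_mat (N ^ n) (length (sym_reps N n))" by (rule symBasis_carrier)
  have K: "ketbra \<psi> \<in> carrier_mat (N ^ n) (N ^ n)" by (rule ketbra_carrier[OF \<psi>])
  have X: "?X \<in> carrier_mat (N ^ n) (N ^ n)" using mult_carrier_mat[OF K Y] .
  have "traceH N n ?X = mtrace (mat_adjoint ?S * (?X * ?S))"
    unfolding traceH_def restrictH_def using assoc_mult_mat[OF mat_adjoint_carrier[OF S] X S] by simp
  also have "\<dots> = mtrace ((?X * ?S) * mat_adjoint ?S)"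
    using S X by (intro mtrace_mult_commute) auto
  also have "\<dots> = mtrace (ketbra \<psi> * (Y * symP N n))"
    using assoc_mult_mat[OF X S mat_adjoint_carrier[OF S]] symBasis_mult_adjoint[OF N]
      assoc_mult_mat[OF K Y symP_carrier] by simp
  also have "\<dots> = conjugate \<psi> \<bullet> (Y *\<^sub>v \<psi>)"
    using mtrace_ketbra_mult[OF \<psi> mult_carrier_mat[OF Y symP_carrier]] assoc_mult_mat_vec[OF Y symP_carrier \<psi>] P\<psi>
    by simp
  finally show ?thesis .
qed

lemma traceH_ketbra_anns_crs:
  assumes N: "0 < N" and \<psi>: "\<psi> \<in> carrier_vec (N ^ M)" and P\<psi>: "symP N M *\<^sub>v \<psi> = \<psi>"
    and ks: "ks \<in> idx_lists N k" and js: "js \<in> idx_lists N k"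
  shows "traceH N M (ketbra \<psi> * anns N M ks * crs N M js)
    = (mat_adjoint (sym_tensor N M k \<psi>) * sym_tensor N M k \<psi>) $$ (from_digits N ks, from_digits N js)"
proof -
  let ?Q = "sym_tensor N M k \<psi>"
  have ks': "set ks \<subseteq> {..<N}" "length ks = k" and js': "set js \<subseteq> {..<N}" "length js = k"
    using ks js by (auto simp: idx_lists_def)
  have C: "crs N M ks \<in> carrier_mat (N ^ (M + k)) (N ^ M)" and D: "crs N M js \<in> carrier_mat (N ^ (M + k)) (N ^ M)"
    using crs_carrier[of N M "ks"] crs_carrier[of N M js] ks' js' by simp_all
  have K: "ketbra \<psi> \<in> carrier_mat (N ^ M) (N ^ M)" by (rule ketbra_carrier[OF \<psi>])
  have "traceH N M (ketbra \<psi> * anns N M ks * crs N M js)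
      = conjugate \<psi> \<bullet> ((mat_adjoint (crs N M ks) * crs N M js) *\<^sub>v \<psi>)"
    using assoc_mult_mat[OF K mat_adjoint_carrier[OF C] D]
      traceH_ketbra_mult[OF N \<psi> P\<psi> mult_carrier_mat[OF mat_adjoint_carrier[OF C] D]]
    by (simp add: anns_eq_mat_adjoint_crs)
  also have "\<dots> = conjugate (col ?Q (from_digits N ks)) \<bullet> col ?Q (from_digits N js)"
    using scalar_prod_mat_adjoint[OF C D \<psi>] crs_mult_vec_eq_col_sym_tensor[OF N ks' \<psi> P\<psi>] crs_mult_vec_eq_col_sym_tensor[OF N js' \<psi> P\<psi>] by simp
  also have "\<dots> = (mat_adjoint ?Q * ?Q) $$ (from_digits N ks, from_digits N js)"
    using from_digits_less[OF ks'(1)] from_digits_less[OF js'(1)] ks' js' by (simp add: row_mat_adjoint)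
  finally show ?thesis .
qed

lemma symP_zero: "symP N 0 = 1\<^sub>m 1"
  by (rule eq_matI) (auto simp: symP_def permutes_empty)

lemma crs_zero_mult_anns_index:
  assumes N: "0 < N" and ks: "ks \<in> idx_lists N k" and js: "js \<in> idx_lists N k"
    and a: "a < N ^ k" and b: "b < N ^ k"
  shows "(crs N 0 (rev ks) * anns N 0 (rev js)) $$ (a, b)
    = of_nat (fact k) * symP N k $$ (a, from_digits N ks) * symP N k $$ (from_digits N js, b)"
proof -
  have crs0: "crs N 0 us = creation_factor 0 k \<cdot>\<^sub>m sym_prepend N 0 (rev xs)"
    if "us = rev xs" "xs \<in> idx_lists N k" for us xs
  proof -
    have xs: "set xs \<subseteq> {..<N}" "length xs = k" using that(2) by (auto simp: idx_lists_def)
    have "crs N 0 us = crs N 0 us * symP N 0"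
      using crs_carrier[of N 0 us] by (simp add: symP_zero)
    then show ?thesis using crs_mult_symP[OF N, of us 0] that xs by simp
  qed
  have F: "sym_prepend N 0 (rev xs) $$ (c, 0) = symP N k $$ (c, from_digits N xs)"
    if "xs \<in> idx_lists N k" "c < N ^ k" for xs c
    using that sym_prepend_mset[OF N, of "rev xs" xs 0] by (auto simp: idx_lists_def sym_prepend_def to_digits_def)
  have lens: "length ks = k" "length js = k" using ks js by (simp_all add: idx_lists_def)
  have cc: "creation_factor 0 k * cnj (creation_factor 0 k) = of_nat (fact k)"
    by (simp add: creation_factor_def flip: of_real_mult)
  have "(crs N 0 (rev ks) * anns N 0 (rev js)) $$ (a, b)
      = creation_factor 0 k * cnj (creation_factor 0 k)
        * symP N k $$ (a, from_digits N ks) * cnj (symP N k $$ (b, from_digits N js))"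
    using a b ks js lens unfolding anns_eq_mat_adjoint_crs crs0[OF refl ks] crs0[OF refl js]
    by (subst index_mult_mat_sum) (auto simp: index_mat_adjoint F mult_ac)
  also have "cnj (symP N k $$ (b, from_digits N js)) = symP N k $$ (from_digits N js, b)"
    using b from_digits_less[of js N] js
    by (subst mat_adjoint_symP[symmetric]) (auto simp: index_mat_adjoint idx_lists_def)
  finally show ?thesis unfolding cc .
qed

lemma symP_mult_Gram_mult_symP:
  assumes N: "0 < N"
  shows "symP N k * (mat_adjoint (sym_tensor N M k \<psi>) * sym_tensor N M k \<psi>) * symP N k
    = mat_adjoint (sym_tensor N M k \<psi>) * sym_tensor N M k \<psi>"
proof -
  let ?Q = "sym_tensor N M k \<psi>" and ?P = "symP N k"
  have Q: "?Q \<in> carrier_mat (N ^ (M + k)) (N ^ k)" by simp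
  have QH: "mat_adjoint ?Q \<in> carrier_mat (N ^ k) (N ^ (M + k))" by simp
  have "?P * mat_adjoint ?Q = mat_adjoint ?Q"
    using mat_adjoint_mult[OF Q symP_carrier] sym_tensor_mult_symP[OF N] mat_adjoint_symP by metis
  then show ?thesis
    using assoc_mult_mat[OF symP_carrier QH Q] assoc_mult_mat[OF QH Q symP_carrier] sym_tensor_mult_symP[OF N]
    by simp
qed

lemma opW_ketbra:
  assumes N: "0 < N" and \<psi>: "\<psi> \<in> carrier_vec (N ^ M)" and P\<psi>: "symP N M *\<^sub>v \<psi> = \<psi>"
  shows "opW N M k (ketbra \<psi>) = mat_adjoint (sym_tensor N M k \<psi>) * sym_tensor N M k \<psi>"
proof (rule eq_matI)
  let ?G = "mat_adjoint (sym_tensor N M k \<psi>) * sym_tensor N M k \<psi>" and ?P = "symP N k"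
  have G: "?G \<in> carrier_mat (N ^ k) (N ^ k)" by (simp add: carrier_matI)
  fix a b assume "a < dim_row ?G" "b < dim_col ?G"
  then have a: "a < N ^ k" and b: "b < N ^ k" by simp_all
  let ?F = "\<lambda>x y. ?P $$ (a, x) * ?G $$ (x, y) * ?P $$ (y, b)"
  have "opW N M k (ketbra \<psi>) $$ (a, b)
      = (\<Sum>ks\<in>idx_lists N k. \<Sum>js\<in>idx_lists N k. ?F (from_digits N ks) (from_digits N js))"
    using a b by (simp add: opW_def traceH_ketbra_anns_crs[OF N \<psi> P\<psi>] crs_zero_mult_anns_index[OF N]
        sum_distrib_left mult_ac cong: sum.cong)
  also have "\<dots> = (\<Sum>ks\<in>idx_lists N k. \<Sum>y<N ^ k. ?F (from_digits N ks) y)"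
    by (intro sum.cong refl sum_idx_lists[OF N])
  also have "\<dots> = (\<Sum>x<N ^ k. \<Sum>y<N ^ k. ?F x y)"
    by (rule sum_idx_lists[OF N])
  also have "\<dots> = (?P * ?G * ?P) $$ (a, b)"
    by (rule index_mult_mat_triple[OF symP_carrier G symP_carrier a b, symmetric])
  also have "\<dots> = ?G $$ (a, b)" using symP_mult_Gram_mult_symP[OF N] by simp
  finally show "opW N M k (ketbra \<psi>) $$ (a, b) = ?G $$ (a, b)" .
qed (simp_all add: opW_def)

section \<open>Nonzero spectra of AB and BA\<close>

lemma char_poly_zero_mat: "char_poly (0\<^sub>m m m :: complex mat) = [:0, 1:] ^ m"
proof -
  have "char_poly (0\<^sub>m m m :: complex mat) = (\<Prod>a\<leftarrow>diag_mat (0\<^sub>m m m). [:- a, 1:])"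
    by (rule char_poly_upper_triangular) (auto simp: upper_triangular_def)
  also have "diag_mat (0\<^sub>m m m :: complex mat) = replicate m 0"
    by (rule nth_equalityI) (auto simp: diag_mat_def)
  finally show ?thesis by (simp add: prod_list_replicate)
qed

lemma similar_mat_four_block_mult_commute:
  fixes A B :: "complex mat"
  assumes A: "A \<in> carrier_mat n m" and B: "B \<in> carrier_mat m n"
  shows "similar_mat (four_block_mat (A * B) (0\<^sub>m n m) B (0\<^sub>m m m))
    (four_block_mat (0\<^sub>m n n) (0\<^sub>m n m) B (B * A))"
proof -
  let ?L = "four_block_mat (A * B) (0\<^sub>m n m) B (0\<^sub>m m m)"
  let ?R = "four_block_mat (0\<^sub>m n n) (0\<^sub>m n m) B (B * A)"
  let ?S = "four_block_mat (1\<^sub>m n) A (0\<^sub>m m n) (1\<^sub>m m)"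
  let ?T = "four_block_mat (1\<^sub>m n) (- A) (0\<^sub>m m n) (1\<^sub>m m)"
  have L: "?L \<in> carrier_mat (n + m) (n + m)" and R: "?R \<in> carrier_mat (n + m) (n + m)"
    and S: "?S \<in> carrier_mat (n + m) (n + m)" and T: "?T \<in> carrier_mat (n + m) (n + m)"
    using A B by (auto intro!: four_block_carrier_mat)
  have Ainv: "A + - A = 0\<^sub>m n m" using A by (intro eq_matI) auto
  have Z: "- 0\<^sub>m m m = (0\<^sub>m m m :: complex mat)" by (intro eq_matI) auto
  have ST: "?S * ?T = 1\<^sub>m (n + m)"
    using A Ainv Z by (subst mult_four_block_mat[of _ n n _ m _ m]) auto
  have TS: "?T * ?S = 1\<^sub>m (n + m)"
    using A Ainv by (subst mult_four_block_mat[of _ n n _ m _ m]) auto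
  have "?L * ?S = ?S * ?R"
    using A B by (subst (1 2) mult_four_block_mat[of _ n n _ m _ m]) (auto simp: assoc_mult_mat[OF A B A])
  then have "?L = ?S * ?R * ?T"
    using assoc_mult_mat[OF L S T] ST right_mult_one_mat[OF L] by simp
  then show ?thesis using similar_matI[of ?L ?R ?S ?T "n + m"] L R S T ST TS by blast
qed

lemma char_poly_mult_commute:
  fixes A B :: "complex mat"
  assumes A: "A \<in> carrier_mat n m" and B: "B \<in> carrier_mat m n"
  shows "char_poly (A * B) * [:0, 1:] ^ m = char_poly (B * A) * [:0, 1:] ^ n"
proof -
  have AB: "A * B \<in> carrier_mat n n" and BA: "B * A \<in> carrier_mat m m" using A B by auto
  have "char_poly (four_block_mat (A * B) (0\<^sub>m n m) B (0\<^sub>m m m)) = char_poly (A * B) * char_poly (0\<^sub>m m m :: complex mat)"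
    by (rule char_poly_0_block'[OF refl _ _ AB B])
      (use char_poly_factorized[OF AB] char_poly_factorized[of "0\<^sub>m m m" m] in auto)
  moreover have "char_poly (four_block_mat (0\<^sub>m n n) (0\<^sub>m n m) B (B * A)) = char_poly (0\<^sub>m n n :: complex mat) * char_poly (B * A)"
    by (rule char_poly_0_block'[OF refl _ _ _ B BA])
      (use char_poly_factorized[OF BA] char_poly_factorized[of "0\<^sub>m n n" n] in auto)
  ultimately show ?thesis
    using char_poly_similar[OF similar_mat_four_block_mult_commute[OF A B]]
    by (simp add: char_poly_zero_mat mult.commute)
qed

lemma eig_mult_mult_commute:
  fixes A B :: "complex mat"
  assumes A: "A \<in> carrier_mat n m" and B: "B \<in> carrier_mat m n" and c: "c \<noteq> 0"
  shows "eig_mult (A * B) c = eig_mult (B * A) c"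
proof -
  have "char_poly (A * B) \<noteq> 0" "char_poly (B * A) \<noteq> 0"
    using degree_monic_char_poly[of "A * B" n] degree_monic_char_poly[of "B * A" m] A B by auto
  moreover have "order c ([:0, 1:] ^ j) = 0" for j :: nat
    by (rule order_0I) (use c in simp)
  ultimately show ?thesis
    using arg_cong[OF char_poly_mult_commute[OF A B], of "order c"]
    by (simp add: eig_mult_def order_mult)
qed

lemma compressed_Gram_factorization:
  fixes Q S T :: "complex mat"
  assumes Q: "Q \<in> carrier_mat n m" and S: "S \<in> carrier_mat n d" and T: "T \<in> carrier_mat m e"
    and SQ: "S * mat_adjoint S * Q = Q" and QT: "Q * (T * mat_adjoint T) = Q"
  defines "X \<equiv> mat_adjoint S * Q * T"
  shows "mat_adjoint S * (Q * mat_adjoint Q) * S = X * mat_adjoint X"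
    and "mat_adjoint T * (mat_adjoint Q * Q) * T = mat_adjoint X * X"
proof -
  have SH: "mat_adjoint S \<in> carrier_mat d n" and TH: "mat_adjoint T \<in> carrier_mat e m"
    and QH: "mat_adjoint Q \<in> carrier_mat m n" using S T Q by simp_all
  have SHQ: "mat_adjoint S * Q \<in> carrier_mat d m" using SH Q by simp
  have QHS: "mat_adjoint Q * S \<in> carrier_mat m d" using QH S by simp
  have XH: "mat_adjoint X = mat_adjoint T * (mat_adjoint Q * S)"
    unfolding X_def by (simp add: mat_adjoint_mult[OF SHQ T] mat_adjoint_mult[OF SH Q])
  have "X * mat_adjoint X = mat_adjoint S * ((Q * (T * mat_adjoint T)) * (mat_adjoint Q * S))"
    unfolding XH unfolding X_def
    using assoc_mult_mat[OF SHQ T mult_carrier_mat[OF TH QHS]] assoc_mult_mat[OF T TH QHS]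
      assoc_mult_mat[OF SH Q mult_carrier_mat[OF mult_carrier_mat[OF T TH] QHS]]
      assoc_mult_mat[OF Q mult_carrier_mat[OF T TH] QHS]
    by simp
  also have "\<dots> = mat_adjoint S * (Q * mat_adjoint Q) * S"
    unfolding QT using assoc_mult_mat[OF Q QH S] assoc_mult_mat[OF SH mult_carrier_mat[OF Q QH] S] by simp
  finally show "mat_adjoint S * (Q * mat_adjoint Q) * S = X * mat_adjoint X" ..
  have "mat_adjoint X * X = mat_adjoint T * ((mat_adjoint Q * (S * mat_adjoint S)) * (Q * T))"
    unfolding XH unfolding X_def
    using assoc_mult_mat[OF TH QHS mult_carrier_mat[OF SHQ T]] assoc_mult_mat[OF QH S mult_carrier_mat[OF SHQ T]]
      assoc_mult_mat[OF SH Q T] assoc_mult_mat[OF S SH mult_carrier_mat[OF Q T]]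
      assoc_mult_mat[OF QH mult_carrier_mat[OF S SH] mult_carrier_mat[OF Q T]]
    by simp
  also have "(mat_adjoint Q * (S * mat_adjoint S)) * (Q * T) = mat_adjoint Q * ((S * mat_adjoint S * Q) * T)"
    using assoc_mult_mat[OF QH mult_carrier_mat[OF S SH] mult_carrier_mat[OF Q T]]
      assoc_mult_mat[OF mult_carrier_mat[OF S SH] Q T] by simp
  also have "mat_adjoint T * (mat_adjoint Q * ((S * mat_adjoint S * Q) * T)) = mat_adjoint T * (mat_adjoint Q * Q) * T"
    unfolding SQ using assoc_mult_mat[OF QH Q T] assoc_mult_mat[OF TH mult_carrier_mat[OF QH Q] T] by simp
  finally show "mat_adjoint T * (mat_adjoint Q * Q) * T = mat_adjoint X * X" ..
qed

theorem mainTheorem4: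
  fixes N M k :: nat and \<psi> :: "complex vec"
  assumes "N \<ge> 2" and "M \<ge> 1"
    and "\<psi> \<in> carrier_vec (N ^ M)" and "symP N M *\<^sub>v \<psi> = \<psi>"
  shows "\<forall>c::complex. c \<noteq> 0 \<longrightarrow>
           eig_mult (restrictH N (M + k) (opT N M k (ketbra \<psi>))) c
         = eig_mult (restrictH N k (opW N M k (ketbra \<psi>))) c"
proof (intro allI impI)
  fix c :: complex assume c: "c \<noteq> 0"
  have N: "0 < N" using assms(1) by simp
  let ?Q = "sym_tensor N M k \<psi>" and ?S = "symBasis N (M + k)" and ?T = "symBasis N k"
  define X where "X = mat_adjoint ?S * ?Q * ?T"
  have SQ: "?S * mat_adjoint ?S * ?Q = ?Q"
    using symBasis_mult_adjoint[OF N] symP_mult_sym_tensor[OF N] by simp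
  have QT: "?Q * (?T * mat_adjoint ?T) = ?Q"
    using symBasis_mult_adjoint[OF N] sym_tensor_mult_symP[OF N] by simp
  have "restrictH N (M + k) (opT N M k (ketbra \<psi>)) = X * mat_adjoint X"
    and "restrictH N k (opW N M k (ketbra \<psi>)) = mat_adjoint X * X"
    unfolding restrictH_def opT_ketbra[OF assms(3)] opW_ketbra[OF N assms(3,4)] X_def
    using compressed_Gram_factorization[OF sym_tensor_carrier symBasis_carrier symBasis_carrier SQ QT]
    by simp_all
  moreover have X: "X \<in> carrier_mat (length (sym_reps N (M + k))) (length (sym_reps N k))"
    unfolding X_def
    using mult_carrier_mat[OF mult_carrier_mat[OF mat_adjoint_carrier[OF symBasis_carrier] sym_tensor_carrier]
        symBasis_carrier] .
  ultimately show "eig_mult (restrictH N (M + k) (opT N M k (ketbra \<psi>))) c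
      = eig_mult (restrictH N k (opW N M k (ketbra \<psi>))) c"
    using eig_mult_mult_commute[OF X mat_adjoint_carrier[OF X] c] by simp
qed

end
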